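(* Let $\mathcal{H}$ be a two-dimensional Hilbert space, let $\varepsilon\in[0,1]$, and let $\mathcal{D}_\varepsilon(\rho)=(1-\varepsilon)\rho+\varepsilon\frac{1}{2}\mathrm{tr}\rho$ be the depolarizing map on $\mathcal{L}(\mathcal{H})$. For any trace-preserving completely positive (TPCP) map $\mathcal{E}$ on $\mathcal{L}(\mathcal{H})$ there exists a TPCP map $\tilde{\mathcal{E}}$ on $\mathcal{L}(\mathcal{H})$ such that $\mathcal{D}_\varepsilon\circ\mathcal{E}=\tilde{\mathcal{E}}\circ\mathcal{D}_\varepsilon$.
   Context: $\mathcal{L}(\mathcal{H})$ denotes the set of linear operators on $\mathcal{H}$. *)

theory Defs
  imports "HOL-Analysis.Analysis"
begin

text \<open>Operators on a two-dimensional Hilbert space H = C^2 are 2x2 complex matrices.\<close>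
type_synonym qop = "complex ^ 2 ^ 2"

definition qtrace :: "qop \<Rightarrow> complex" where
  "qtrace A = (\<Sum>i\<in>UNIV. A $ i $ i)"

definition qscale :: "complex \<Rightarrow> qop \<Rightarrow> qop" where
  "qscale c A = (\<chi> i j. c * A $ i $ j)"

definition qid :: qop where
  "qid = (\<chi> i j. if i = j then 1 else 0)"

definition clinear_map :: "(qop \<Rightarrow> qop) \<Rightarrow> bool" where
  "clinear_map E \<longleftrightarrow> (\<forall>A B. E (A + B) = E A + E B) \<and> (\<forall>c A. E (qscale c A) = qscale c (E A))"

definition trace_preserving :: "(qop \<Rightarrow> qop) \<Rightarrow> bool" where
  "trace_preserving E \<longleftrightarrow> (\<forall>A. qtrace (E A) = qtrace A)"

text \<open>An n x n block matrix X with blocks X a b in L(H) (a, b < n), i.e. an element of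
  M_n(C) \<otimes> L(H), is positive semidefinite iff its quadratic form is real and nonnegative
  on every vector of C^n \<otimes> H (represented as v :: nat => complex^2, using components a < n).\<close>
definition block_psd :: "nat \<Rightarrow> (nat \<Rightarrow> nat \<Rightarrow> qop) \<Rightarrow> bool" where
  "block_psd n X \<longleftrightarrow> (\<forall>v :: nat \<Rightarrow> complex ^ 2.
     (let q = (\<Sum>a<n. \<Sum>b<n. \<Sum>i\<in>UNIV. \<Sum>j\<in>UNIV. cnj (v a $ i) * X a b $ i $ j * v b $ j)
      in q \<in> \<real> \<and> Re q \<ge> 0))"

text \<open>Complete positivity: id_n \<otimes> E is positive for every n.\<close>
definition completely_positive :: "(qop \<Rightarrow> qop) \<Rightarrow> bool" where
  "completely_positive E \<longleftrightarrow> (\<forall>n X. block_psd n X \<longrightarrow> block_psd n (\<lambda>a b. E (X a b)))"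

definition TPCP :: "(qop \<Rightarrow> qop) \<Rightarrow> bool" where
  "TPCP E \<longleftrightarrow> clinear_map E \<and> trace_preserving E \<and> completely_positive E"

definition depol :: "real \<Rightarrow> qop \<Rightarrow> qop" where
  "depol \<epsilon> \<rho> = qscale (complex_of_real (1 - \<epsilon>)) \<rho> + qscale (complex_of_real \<epsilon> * qtrace \<rho> / 2) qid"

end

theory Submission
  imports Defs
begin

text \<open>
  Let \<open>\<Theta>(A) = tr(A) I - A\<close>, the adjugate of a 2x2 matrix. It is trace preserving, and
  applied to the blocks of a block matrix together with swapping the blocks it is the
  congruence by \<open>I \<otimes> J\<close>, \<open>J = [[0,1],[-1,0]]\<close>, of the full transpose, hence keeps block matrices
  positive. Therefore \<open>\<Theta> \<circ> \<E> \<circ> \<Theta>\<close> is completely positive whenever \<open>\<E>\<close> is, and so is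
  \<open>\<E>' = (1 - \<epsilon>/2) \<E> + (\<epsilon>/2) \<Theta> \<circ> \<E> \<circ> \<Theta>\<close>. For trace preserving \<open>\<E>\<close> one computes
  \<open>\<E>'(A) = \<E>(A) + (\<epsilon>/2) tr(A) (I - \<E>(I))\<close>, and this map satisfies
  \<open>\<D>\<^sub>\<epsilon> \<circ> \<E> = \<E>' \<circ> \<D>\<^sub>\<epsilon>\<close>.
\<close>

lemma qscale_nth [simp]: "qscale c A $ i $ j = c * A $ i $ j"
  by (simp add: qscale_def)

lemma qid_nth [simp]: "qid $ i $ j = (if i = j then 1 else 0)"
  by (simp add: qid_def)

lemma qtrace_2: "qtrace A = A $ 1 $ 1 + A $ 2 $ 2"
  by (simp add: qtrace_def sum_2)

lemma qtrace_add: "qtrace (A + B) = qtrace A + qtrace B"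
  by (simp add: qtrace_2)

lemma qtrace_diff: "qtrace (A - B) = qtrace A - qtrace B"
  by (simp add: qtrace_2)

lemma qtrace_qscale: "qtrace (qscale c A) = c * qtrace A"
  by (simp add: qtrace_2 algebra_simps)

lemma qtrace_qid: "qtrace qid = 2"
  by (simp add: qtrace_2)

lemma clinear_map_diff:
  assumes "clinear_map E"
  shows "E (A - B) = E A - E B"
proof -
  have "A - B = A + qscale (-1) B" and "E A - E B = E A + qscale (-1) (E B)"
    by (simp_all add: vec_eq_iff)
  then show ?thesis
    using assms unfolding clinear_map_def by metis
qed

definition qadj :: "qop \<Rightarrow> qop" where
  "qadj A = qscale (qtrace A) qid - A"

lemma qadj_nth: "qadj A $ i $ j = (if i = j then A $ 1 $ 1 + A $ 2 $ 2 else 0) - A $ i $ j"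
  by (simp add: qadj_def qtrace_2)

lemma qtrace_qadj: "qtrace (qadj A) = qtrace A"
  by (simp add: qadj_def qtrace_diff qtrace_qscale qtrace_qid)

lemma qadj_conj_eq:
  assumes "clinear_map E" and "trace_preserving E"
  shows "qadj (E (qadj A)) = E A + qscale (qtrace A) (qid - E qid)"
proof -
  have "E (qadj A) = qscale (qtrace A) (E qid) - E A"
    using assms(1) unfolding qadj_def clinear_map_diff[OF assms(1)] clinear_map_def by simp
  moreover have "qtrace (E (qadj A)) = qtrace A"
    using assms(2) by (simp add: trace_preserving_def qtrace_qadj)
  ultimately show ?thesis
    unfolding qadj_def by (simp add: vec_eq_iff algebra_simps)
qed

lemma block_psd_nonneg_combination:
  assumes "block_psd n X" and "block_psd n Y" and "c \<ge> 0" and "d \<ge> 0"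
  shows "block_psd n (\<lambda>a b. qscale (of_real c) (X a b) + qscale (of_real d) (Y a b))"
  unfolding block_psd_def Let_def
proof
  fix v :: "nat \<Rightarrow> complex ^ 2"
  define form where "form Z = (\<Sum>a<n. \<Sum>b<n. \<Sum>i\<in>UNIV. \<Sum>j\<in>UNIV.
    cnj (v a $ i) * Z a b $ i $ j * v b $ j)" for Z :: "nat \<Rightarrow> nat \<Rightarrow> qop"
  have X: "form X \<in> \<real>" "Re (form X) \<ge> 0" and Y: "form Y \<in> \<real>" "Re (form Y) \<ge> 0"
    using assms(1,2) unfolding block_psd_def Let_def form_def by blast+
  have "form (\<lambda>a b. qscale (of_real c) (X a b) + qscale (of_real d) (Y a b))
      = of_real c * form X + of_real d * form Y"
    unfolding form_def by (simp add: sum_distrib_left sum.distrib algebra_simps)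
  moreover have "of_real c * form X + of_real d * form Y \<in> \<real>"
    using X(1) Y(1) by (intro Reals_add Reals_mult) auto
  moreover have "Re (of_real c * form X + of_real d * form Y) \<ge> 0"
    using X Y assms(3,4) by simp
  ultimately show "form (\<lambda>a b. qscale (of_real c) (X a b) + qscale (of_real d) (Y a b)) \<in> \<real> \<and>
      0 \<le> Re (form (\<lambda>a b. qscale (of_real c) (X a b) + qscale (of_real d) (Y a b)))"
    by simp
qed

lemma block_psd_qadj_swap:
  assumes "block_psd n X"
  shows "block_psd n (\<lambda>a b. qadj (X b a))"
  unfolding block_psd_def Let_def
proof
  fix v :: "nat \<Rightarrow> complex ^ 2"
  define w :: "nat \<Rightarrow> complex ^ 2"
    where "w a = (\<chi> k. if k = 1 then cnj (v a $ 2) else - cnj (v a $ 1))" for a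
  have w1: "w a $ 1 = cnj (v a $ 2)" and w2: "w a $ 2 = - cnj (v a $ 1)" for a
    by (simp_all add: w_def)
  have block: "(\<Sum>i\<in>UNIV. \<Sum>j\<in>UNIV. cnj (v a $ i) * qadj (X b a) $ i $ j * v b $ j)
      = (\<Sum>i\<in>UNIV. \<Sum>j\<in>UNIV. cnj (w b $ i) * X b a $ i $ j * w a $ j)" for a b
    by (simp add: sum_2 qadj_nth w1 w2 algebra_simps)
  have "(\<Sum>a<n. \<Sum>b<n. \<Sum>i\<in>UNIV. \<Sum>j\<in>UNIV. cnj (v a $ i) * qadj (X b a) $ i $ j * v b $ j)
      = (\<Sum>a<n. \<Sum>b<n. \<Sum>i\<in>UNIV. \<Sum>j\<in>UNIV. cnj (w a $ i) * X a b $ i $ j * w b $ j)"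
    unfolding block by (rule sum.swap)
  then show "(\<Sum>a<n. \<Sum>b<n. \<Sum>i\<in>UNIV. \<Sum>j\<in>UNIV.
      cnj (v a $ i) * qadj (X b a) $ i $ j * v b $ j) \<in> \<real> \<and>
    0 \<le> Re (\<Sum>a<n. \<Sum>b<n. \<Sum>i\<in>UNIV. \<Sum>j\<in>UNIV.
      cnj (v a $ i) * qadj (X b a) $ i $ j * v b $ j)"
    using assms unfolding block_psd_def Let_def by metis
qed

lemma completely_positive_qadj_conj:
  assumes "completely_positive E"
  shows "completely_positive (\<lambda>A. qadj (E (qadj A)))"
  unfolding completely_positive_def
proof (intro allI impI)
  fix n X
  assume "block_psd n X"
  then have "block_psd n (\<lambda>a b. E (qadj (X b a)))"
    using assms block_psd_qadj_swap unfolding completely_positive_def by blast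
  then show "block_psd n (\<lambda>a b. qadj (E (qadj (X a b))))"
    by (rule block_psd_qadj_swap)
qed

lemma completely_positive_nonneg_combination:
  assumes "completely_positive E" and "completely_positive F" and "c \<ge> 0" and "d \<ge> 0"
  shows "completely_positive (\<lambda>A. qscale (of_real c) (E A) + qscale (of_real d) (F A))"
  using assms block_psd_nonneg_combination unfolding completely_positive_def by blast

definition depol_intertwiner :: "real \<Rightarrow> (qop \<Rightarrow> qop) \<Rightarrow> qop \<Rightarrow> qop" where
  "depol_intertwiner \<epsilon> E A = E A + qscale (of_real \<epsilon> / 2 * qtrace A) (qid - E qid)"

lemma depol_intertwiner_eq_combination:
  assumes "clinear_map E" and "trace_preserving E"
  shows "depol_intertwiner \<epsilon> E A
    = qscale (of_real (1 - \<epsilon> / 2)) (E A) + qscale (of_real (\<epsilon> / 2)) (qadj (E (qadj A)))"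
  unfolding qadj_conj_eq[OF assms] depol_intertwiner_def by (simp add: vec_eq_iff algebra_simps)

lemma TPCP_depol_intertwiner:
  assumes "0 \<le> \<epsilon>" and "\<epsilon> \<le> 2" and "TPCP E"
  shows "TPCP (depol_intertwiner \<epsilon> E)"
proof -
  have lin: "clinear_map E" and tp: "trace_preserving E" and cp: "completely_positive E"
    using assms(3) unfolding TPCP_def by auto
  have "clinear_map (depol_intertwiner \<epsilon> E)"
    using lin unfolding clinear_map_def depol_intertwiner_def
    by (auto simp: qtrace_add qtrace_qscale vec_eq_iff field_simps)
  moreover have "trace_preserving (depol_intertwiner \<epsilon> E)"
    using tp unfolding trace_preserving_def depol_intertwiner_def
    by (simp add: qtrace_add qtrace_diff qtrace_qscale qtrace_qid)
  moreover have "completely_positive (depol_intertwiner \<epsilon> E)"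
    unfolding depol_intertwiner_eq_combination[OF lin tp, abs_def] using assms(1,2)
    by (intro completely_positive_nonneg_combination cp completely_positive_qadj_conj) auto
  ultimately show ?thesis
    unfolding TPCP_def by blast
qed

lemma depol_comp_eq_depol_intertwiner_comp:
  assumes "clinear_map E" and "trace_preserving E"
  shows "depol \<epsilon> \<circ> E = depol_intertwiner \<epsilon> E \<circ> depol \<epsilon>"
  using assms unfolding clinear_map_def trace_preserving_def
  by (auto simp: fun_eq_iff depol_def depol_intertwiner_def qtrace_add qtrace_qscale qtrace_qid
      vec_eq_iff algebra_simps)

theorem lemma2:
  fixes \<epsilon> :: real and E :: "qop \<Rightarrow> qop"
  assumes "0 \<le> \<epsilon>" and "\<epsilon> \<le> 1" and "TPCP E"
  shows "\<exists>E'. TPCP E' \<and> depol \<epsilon> \<circ> E = E' \<circ> depol \<epsilon>"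
proof (intro exI conjI)
  show "TPCP (depol_intertwiner \<epsilon> E)"
    using assms by (intro TPCP_depol_intertwiner) auto
  show "depol \<epsilon> \<circ> E = depol_intertwiner \<epsilon> E \<circ> depol \<epsilon>"
    using assms(3) unfolding TPCP_def by (intro depol_comp_eq_depol_intertwiner_comp) auto
qed

end
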